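(* Let $a,b,f,d$ be positive integers with $f<\min\{a,b\}$. Let $A_1$ be the $a\times(a+b)$ array whose empty cells are exactly those in rows $[a-f+1,a]$ and columns $[1,a]$, and let $B_1$ be the $(b+f)\times(a+b)$ array whose empty cells are exactly those in rows $[b+1,b+f]$ and columns $[a+f+1,a+b]$. Let $A_2=J_{d,a+b}$ be the completely filled $d\times(a+b)$ array. Let $\phi$ be the bishop's move function on $[A_1\mid A_2]^T$, and let $\sigma$ be the move function on $[B_1\mid A_2]^T$ given by $\sigma(x)=s_C(s_R(x))$ if $x$ lies in a row of $A_2$ and $\sigma(x)=s_C(s_R^{-1}(x))$ if $x$ lies in a row of $B_1$. Then $A_1$ and $B_1$ are $(\phi,\sigma)$-equivalent with respect to $A_2$.
   Context: Arrays are partially filled and toroidal; $F(X)$ is the set of filled cells. $s_R(i,j)=(i,j+t)$, $s_C(i,j)=(i+t,j)$ with $t\ge1$ minimal such that the cell is filled (computed in the whole stacked array). $[Y\mid X]^T$ denotes the array obtained by placing $Y$ above $X$. For $\phi$ on $[A_1\mid X]^T$ and $\sigma$ on $[B_1\mid X]^T$, $\phi_2(x)=\phi^t(x)$ with $t\ge1$ minimal such that $\phi^t(x)\in X$ (for $x\in F(X)$), similarly $\sigma_2$. $A_1,B_1$ are $(\phi,\sigma)$-equivalent with respect to $X$ if for every $x\in F(X)$: $\phi(x)\notin X\iff\sigma(x)\notin X$, and when both are outside $X$, $\phi_2(x)=\sigma_2(x)$. *)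

theory Defs
  imports Main
begin

text \<open>Cells are pairs (row, column), 0-indexed. An array with R rows and C columns is
  represented by its set F of filled cells (a subset of {0..<R} x {0..<C}).\<close>

definition sR :: "nat \<Rightarrow> (nat \<times> nat) set \<Rightarrow> nat \<times> nat \<Rightarrow> nat \<times> nat" where
  "sR C F x = (let (i, j) = x;
                   t = (LEAST t. 1 \<le> t \<and> (i, (j + t) mod C) \<in> F)
               in (i, (j + t) mod C))"

definition sC :: "nat \<Rightarrow> (nat \<times> nat) set \<Rightarrow> nat \<times> nat \<Rightarrow> nat \<times> nat" where
  "sC R F x = (let (i, j) = x;
                   t = (LEAST t. 1 \<le> t \<and> ((i + t) mod R, j) \<in> F)
               in ((i + t) mod R, j))"

definition sR_inv :: "nat \<Rightarrow> (nat \<times> nat) set \<Rightarrow> nat \<times> nat \<Rightarrow> nat \<times> nat" where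
  "sR_inv C F = the_inv_into F (sR C F)"

text \<open>[Y | X]^T : Y (with mY rows) placed above X; rows of X are shifted down by mY.\<close>
definition stack :: "(nat \<times> nat) set \<Rightarrow> nat \<Rightarrow> (nat \<times> nat) set \<Rightarrow> (nat \<times> nat) set" where
  "stack FY mY FX = FY \<union> {(i + mY, j) | i j. (i, j) \<in> FX}"

text \<open>phi_2: first return to the X-part (rows >= m) of the stacked array, starting from
  the cell x of X (given in X-coordinates); the result is given in X-coordinates.\<close>
definition first_return :: "(nat \<times> nat \<Rightarrow> nat \<times> nat) \<Rightarrow> nat \<Rightarrow> nat \<times> nat \<Rightarrow> nat \<times> nat" where
  "first_return phi m x = (let y = (fst x + m, snd x);
                               t = (LEAST t. 1 \<le> t \<and> m \<le> fst ((phi ^^ t) y));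
                               z = (phi ^^ t) y
                           in (fst z - m, snd z))"

text \<open>(phi,sigma)-equivalence with respect to X, where phi acts on [A|X]^T (A has mA rows)
  and sigma acts on [B|X]^T (B has mB rows).\<close>
definition phi_sigma_equiv ::
  "(nat \<times> nat \<Rightarrow> nat \<times> nat) \<Rightarrow> nat \<Rightarrow> (nat \<times> nat \<Rightarrow> nat \<times> nat) \<Rightarrow> nat \<Rightarrow> (nat \<times> nat) set \<Rightarrow> bool" where
  "phi_sigma_equiv phi mA sigma mB FX \<longleftrightarrow>
     (\<forall>x\<in>FX.
        (fst (phi (fst x + mA, snd x)) < mA \<longleftrightarrow> fst (sigma (fst x + mB, snd x)) < mB) \<and>
        (fst (phi (fst x + mA, snd x)) < mA \<and> fst (sigma (fst x + mB, snd x)) < mB \<longrightarrow>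
           first_return phi mA x = first_return sigma mB x))"

text \<open>The concrete arrays (0-indexed versions of the paper's 1-indexed arrays).\<close>
definition A1 :: "nat \<Rightarrow> nat \<Rightarrow> nat \<Rightarrow> (nat \<times> nat) set" where
  "A1 a b f = {(i, j). i < a \<and> j < a + b \<and> \<not> (a - f \<le> i \<and> j < a)}"

definition B1 :: "nat \<Rightarrow> nat \<Rightarrow> nat \<Rightarrow> (nat \<times> nat) set" where
  "B1 a b f = {(i, j). i < b + f \<and> j < a + b \<and> \<not> (b \<le> i \<and> a + f \<le> j)}"

definition J :: "nat \<Rightarrow> nat \<Rightarrow> (nat \<times> nat) set" where
  "J d n = {(i, j). i < d \<and> j < n}"

definition bishop :: "nat \<Rightarrow> nat \<Rightarrow> (nat \<times> nat) set \<Rightarrow> nat \<times> nat \<Rightarrow> nat \<times> nat" where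
  "bishop R C F x = sC R F (sR C F x)"

end

theory Submission
  imports Defs
begin

text \<open>Both stacked arrays have the same shape: full rows, then f rows filled exactly on one
  interval of columns, then the d full rows of A_2. Both moves are s_C after a horizontal step
  that shifts each row cyclically within its filled interval: by +1 for phi, and, above A_2,
  by -1 for sigma. A cell of A_2 can only leave A_2 from its last row; its orbit then runs
  diagonally through the full rows up to an exit column c. If c lies in the filled interval,
  the orbit continues diagonally, cyclically within that interval, through the f partial rows;
  otherwise it drops straight back into A_2. Modulo a + b, for phi c = j + 1 + a - f and the
  return column is a + (c - a + f) mod b or c; for sigma the exit column is u = j + 1 + a = c + f
  and the return column is (u - f) mod (a + f) (taken in the integers) or u. A three-case
  comparison shows that they agree.\<close>

lemma mod_pred_succ:
  fixes x L :: nat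
  assumes "x < L"
  shows "((x + (L - 1)) mod L + 1) mod L = x" and "((x + 1) mod L + (L - 1)) mod L = x"
proof -
  have "x + (L - 1) + 1 = x + L" "x + 1 + (L - 1) = x + L" using assms by simp_all
  then show "((x + (L - 1)) mod L + 1) mod L = x" "((x + 1) mod L + (L - 1)) mod L = x"
    using assms by (metis mod_add_left_eq mod_add_self2 mod_less)+
qed

lemma mod_add_mult_step: "((x + k * e) mod L + e) mod L = (x + (k + 1) * e) mod (L::nat)"
proof -
  have "x + k * e + e = x + (k + 1) * e" by simp
  then show ?thesis by (metis mod_add_left_eq)
qed

lemma mod_add_mult_pred:
  fixes u f L :: nat
  assumes "f \<le> L"
  shows "(u + f * (L - 1)) mod L = (u + (L - f)) mod L"
proof (cases f)
  case (Suc g)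
  then have "u + f * (L - 1) = (u + (L - f)) + g * L" using assms by (simp add: algebra_simps)
  then show ?thesis by (metis mod_mult_self1)
qed simp

lemma fst_sR: "fst (sR C F x) = fst x"
  by (cases x) (simp add: sR_def Let_def)

lemma sR_eqI:
  assumes "1 \<le> t" "(i, (j + t) mod C) \<in> F"
    and "\<And>s. 1 \<le> s \<Longrightarrow> s < t \<Longrightarrow> (i, (j + s) mod C) \<notin> F"
  shows "sR C F (i, j) = (i, (j + t) mod C)"
proof -
  have "(LEAST t. 1 \<le> t \<and> (i, (j + t) mod C) \<in> F) = t"
    by (rule Least_equality) (use assms not_le in blast)+
  then show ?thesis by (simp add: sR_def)
qed

lemma sC_eqI:
  assumes "1 \<le> t" "((i + t) mod R, j) \<in> F"
    and "\<And>s. 1 \<le> s \<Longrightarrow> s < t \<Longrightarrow> ((i + s) mod R, j) \<notin> F"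
  shows "sC R F (i, j) = ((i + t) mod R, j)"
proof -
  have "(LEAST t. 1 \<le> t \<and> ((i + t) mod R, j) \<in> F) = t"
    by (rule Least_equality) (use assms not_le in blast)+
  then show ?thesis by (simp add: sC_def)
qed

lemma sC_next: "((i + 1) mod R, j) \<in> F \<Longrightarrow> sC R F (i, j) = ((i + 1) mod R, j)"
  using sC_eqI[of 1 i R j F] by simp

lemma sR_interval_row:
  assumes row: "\<And>k. (i, k) \<in> F \<longleftrightarrow> lo \<le> k \<and> k < hi"
    and "hi \<le> C" "lo \<le> k" "k < hi"
  shows "sR C F (i, k) = (i, lo + (k - lo + 1) mod (hi - lo))"
proof (cases "k + 1 < hi")
  case True
  have "sR C F (i, k) = (i, (k + 1) mod C)"
    by (rule sR_eqI) (use True assms in auto)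
  then show ?thesis using True assms by simp
next
  case False
  then have k: "k = hi - 1" using assms by simp
  have wrap: "(k + (C - k + lo)) mod C = lo" using assms by (simp add: le_mod_geq)
  have "sR C F (i, k) = (i, (k + (C - k + lo)) mod C)"
  proof (rule sR_eqI)
    show "1 \<le> C - k + lo" using assms by simp
    show "(i, (k + (C - k + lo)) mod C) \<in> F" using wrap row assms by simp
  next
    fix s assume s: "1 \<le> s" "s < C - k + lo"
    show "(i, (k + s) mod C) \<notin> F"
    proof (cases "k + s < C")
      case True
      moreover have "hi \<le> k + s" using k s assms by simp
      ultimately show ?thesis using row by simp
    next
      case False
      then have "(k + s) mod C = k + s - C" using s assms by (simp add: le_mod_geq)
      then show ?thesis using row k s False assms by simp
    qed
  qed
  moreover have "k - lo + 1 = hi - lo" using k assms by simp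
  ultimately show ?thesis using wrap by simp
qed

lemma sR_inv_eqI:
  assumes "x \<in> F" "sR C F x = y" "\<And>z. z \<in> F \<Longrightarrow> sR C F z = y \<Longrightarrow> z = x"
  shows "sR_inv C F y = x"
  unfolding sR_inv_def the_inv_into_def by (rule the_equality) (use assms in blast)+

lemma sR_inv_interval_row:
  assumes row: "\<And>k. (i, k) \<in> F \<longleftrightarrow> lo \<le> k \<and> k < hi"
    and "hi \<le> C" "lo \<le> c" "c < hi"
  shows "sR_inv C F (i, c) = (i, lo + (c - lo + (hi - lo - 1)) mod (hi - lo))"
proof -
  define L where "L = hi - lo"
  have L: "0 < L" "c - lo < L" using assms by (simp_all add: L_def)
  have sR_row: "sR C F (i, k) = (i, lo + (k - lo + 1) mod L)" if "lo \<le> k" "k < hi" for k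
    using sR_interval_row[OF row assms(2) that] by (simp add: L_def)
  have "sR_inv C F (i, c) = (i, lo + (c - lo + (L - 1)) mod L)"
  proof (rule sR_inv_eqI)
    have in_row: "lo + x < hi" if "x < L" for x using that by (simp add: L_def)
    have "(c - lo + (L - 1)) mod L < L" using L by simp
    then show "(i, lo + (c - lo + (L - 1)) mod L) \<in> F" using row in_row by simp
    then show "sR C F (i, lo + (c - lo + (L - 1)) mod L) = (i, c)"
      using sR_row mod_pred_succ(1)[OF L(2)] row assms by simp
  next
    fix z assume z: "z \<in> F" "sR C F z = (i, c)"
    obtain k where zk: "z = (i, k)" using z(2) fst_sR[of C F z] by (cases z) simp
    then have k: "lo \<le> k" "k < hi" using z(1) row by simp_all
    then have "c = lo + (k - lo + 1) mod L" using z(2) zk sR_row by simp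
    moreover have "k - lo < L" using k by (simp add: L_def)
    ultimately have "(c - lo + (L - 1)) mod L = k - lo"
      using mod_pred_succ(2)[of "k - lo" L] by simp
    then show "z = (i, lo + (c - lo + (L - 1)) mod L)" using zk k by simp
  qed
  then show ?thesis by (simp add: L_def)
qed

lemma mem_stack_iff: "(r, c) \<in> stack FY mY FX \<longleftrightarrow> (r, c) \<in> FY \<or> mY \<le> r \<and> (r - mY, c) \<in> FX"
  unfolding stack_def by (cases "mY \<le> r") (auto intro: exI[of _ "r - mY"])

lemma first_return_path:
  assumes start: "phi (fst x + m, snd x) = p 0"
    and step: "\<And>s. s < n \<Longrightarrow> phi (p s) = p (Suc s)"
    and stays: "\<And>s. s < n \<Longrightarrow> fst (p s) < m"
    and returns: "m \<le> fst (p n)"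
  shows "first_return phi m x = (fst (p n) - m, snd (p n))"
proof -
  let ?y = "(fst x + m, snd x)"
  have orbit: "(phi ^^ Suc s) ?y = p s" if "s \<le> n" for s
    using that by (induction s) (simp_all add: start step)
  have "(LEAST t. 1 \<le> t \<and> m \<le> fst ((phi ^^ t) ?y)) = Suc n"
  proof (rule Least_equality)
    show "1 \<le> Suc n \<and> m \<le> fst ((phi ^^ Suc n) ?y)" using orbit returns by simp
  next
    fix t assume t: "1 \<le> t \<and> m \<le> fst ((phi ^^ t) ?y)"
    then obtain s where s: "t = Suc s" by (cases t) auto
    show "Suc n \<le> t"
    proof (rule ccontr)
      assume "\<not> Suc n \<le> t"
      then have "s < n" using s by simp
      then show False using t s orbit[of s] stays[of s] by simp
    qed
  qed
  then show ?thesis using orbit[of n] by (simp add: first_return_def Let_def)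
qed

lemma phi_sigma_equiv_J_last_rowI:
  assumes "\<And>i j. i < d \<Longrightarrow> j < C \<Longrightarrow> fst (\<phi> (i + mA, j)) < mA \<longleftrightarrow> i = d - 1"
    and "\<And>i j. i < d \<Longrightarrow> j < C \<Longrightarrow> fst (\<sigma> (i + mB, j)) < mB \<longleftrightarrow> i = d - 1"
    and "\<And>j. j < C \<Longrightarrow> first_return \<phi> mA (d - 1, j) = first_return \<sigma> mB (d - 1, j)"
  shows "phi_sigma_equiv \<phi> mA \<sigma> mB (J d C)"
  unfolding phi_sigma_equiv_def J_def using assms by auto

locale block_stack =
  fixes C m n lo hi d :: nat and F :: "(nat \<times> nat) set"
  assumes full_rows_pos: "0 < n" and full_le_top: "n \<le> m"
    and lo_less_hi: "lo < hi" and hi_le_C: "hi \<le> C" and bottom_pos: "0 < d"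
    and mem_F: "(r, c) \<in> F \<longleftrightarrow>
      c < C \<and> (r < n \<or> n \<le> r \<and> r < m \<and> lo \<le> c \<and> c < hi \<or> m \<le> r \<and> r < m + d)"
begin

lemma full_row: "r < n \<or> m \<le> r \<and> r < m + d \<Longrightarrow> (r, c) \<in> F \<longleftrightarrow> 0 \<le> c \<and> c < C"
  using full_le_top by (auto simp: mem_F)

lemma partial_row: "n \<le> r \<Longrightarrow> r < m \<Longrightarrow> (r, c) \<in> F \<longleftrightarrow> lo \<le> c \<and> c < hi"
  using hi_le_C by (auto simp: mem_F)

lemma interval_mod_less: "lo + x mod (hi - lo) < hi"
proof -
  have "x mod (hi - lo) < hi - lo" using lo_less_hi by simp
  then show ?thesis by linarith
qed

lemma sR_full_row:
  "r < n \<or> m \<le> r \<and> r < m + d \<Longrightarrow> c < C \<Longrightarrow> sR C F (r, c) = (r, (c + 1) mod C)"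
  using sR_interval_row[of r F 0 C C c, OF full_row] by simp

lemma sR_partial_row:
  "n \<le> r \<Longrightarrow> r < m \<Longrightarrow> lo \<le> c \<Longrightarrow> c < hi \<Longrightarrow>
    sR C F (r, c) = (r, lo + (c - lo + 1) mod (hi - lo))"
  using sR_interval_row[of r F lo hi C c, OF partial_row] hi_le_C by simp

lemma sR_inv_full_row:
  "r < n \<Longrightarrow> c < C \<Longrightarrow> sR_inv C F (r, c) = (r, (c + (C - 1)) mod C)"
  using sR_inv_interval_row[of r F 0 C C c, OF full_row] by simp

lemma sR_inv_partial_row:
  "n \<le> r \<Longrightarrow> r < m \<Longrightarrow> lo \<le> c \<Longrightarrow> c < hi \<Longrightarrow>
    sR_inv C F (r, c) = (r, lo + (c - lo + (hi - lo - 1)) mod (hi - lo))"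
  using sR_inv_interval_row[of r F lo hi C c, OF partial_row] hi_le_C by simp

end

locale block_walk = block_stack +
  fixes h :: "nat \<times> nat \<Rightarrow> nat \<times> nat" and \<delta> \<delta>' :: nat
  assumes h_full: "r < n \<Longrightarrow> c < C \<Longrightarrow> h (r, c) = (r, (c + \<delta>) mod C)"
    and h_partial: "n \<le> r \<Longrightarrow> r < m \<Longrightarrow> lo \<le> c \<Longrightarrow> c < hi \<Longrightarrow>
      h (r, c) = (r, lo + (c - lo + \<delta>') mod (hi - lo))"
    and h_bottom: "m \<le> r \<Longrightarrow> r < m + d \<Longrightarrow> c < C \<Longrightarrow> h (r, c) = (r, (c + 1) mod C)"
begin

definition move :: "nat \<times> nat \<Rightarrow> nat \<times> nat" where
  "move x = sC (m + d) F (h x)"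

lemma move_bottom:
  assumes "i < d" "j < C"
  shows "move (i + m, j) = ((i + m + 1) mod (m + d), (j + 1) mod C)"
proof -
  have "((i + m + 1) mod (m + d), (j + 1) mod C) \<in> F"
  proof (cases "i + 1 < d")
    case True
    then show ?thesis using assms by (simp add: mem_F)
  next
    case False
    then have "i + m + 1 = m + d" using assms by simp
    then have "(i + m + 1) mod (m + d) = 0" by (metis mod_self)
    then show ?thesis using assms full_rows_pos by (simp add: mem_F)
  qed
  then show ?thesis using assms h_bottom by (simp add: move_def sC_next)
qed

lemma leaves_bottom_iff:
  assumes "i < d" "j < C"
  shows "fst (move (i + m, j)) < m \<longleftrightarrow> i = d - 1"
proof (cases "i + 1 < d")
  case True
  then show ?thesis using move_bottom[OF assms] by simp
next
  case False
  then have "i + m + 1 = m + d" "i = d - 1" using assms by simp_all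
  then have "(i + m + 1) mod (m + d) = 0" by (metis mod_self)
  then show ?thesis using move_bottom[OF assms] \<open>i = d - 1\<close> full_rows_pos full_le_top by simp
qed

lemma move_full:
  assumes "r + 1 < n" "c < C"
  shows "move (r, c) = (r + 1, (c + \<delta>) mod C)"
proof -
  have "((r + 1) mod (m + d), (c + \<delta>) mod C) \<in> F"
    using assms full_le_top by (simp add: mem_F)
  then show ?thesis using assms full_le_top h_full by (simp add: move_def sC_next)
qed

lemma move_enter:
  assumes "c < C" "lo \<le> (c + \<delta>) mod C" "(c + \<delta>) mod C < hi"
  shows "move (n - 1, c) = (n, (c + \<delta>) mod C)"
proof -
  have "n - 1 + 1 = n" "n < m + d" using full_rows_pos full_le_top bottom_pos by simp_all
  moreover have "(n, (c + \<delta>) mod C) \<in> F" using assms hi_le_C full_le_top bottom_pos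
    by (auto simp: mem_F)
  ultimately show ?thesis using assms full_rows_pos h_full by (simp add: move_def sC_next)
qed

lemma move_skip:
  assumes "c < C" "\<not> (lo \<le> (c + \<delta>) mod C \<and> (c + \<delta>) mod C < hi)"
  shows "move (n - 1, c) = (m, (c + \<delta>) mod C)"
proof -
  let ?c = "(c + \<delta>) mod C"
  have n: "n - 1 + (m - n + 1) = m" using full_rows_pos full_le_top by simp
  have "sC (m + d) F (n - 1, ?c) = ((n - 1 + (m - n + 1)) mod (m + d), ?c)"
  proof (rule sC_eqI)
    show "((n - 1 + (m - n + 1)) mod (m + d), ?c) \<in> F"
      unfolding n using bottom_pos assms by (simp add: mem_F)
  next
    fix s assume "1 \<le> s" "s < m - n + 1"
    then have "(n - 1 + s) mod (m + d) = n - 1 + s" "n \<le> n - 1 + s" "n - 1 + s < m"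
      using full_rows_pos full_le_top by simp_all
    then show "((n - 1 + s) mod (m + d), ?c) \<notin> F" using assms by (simp add: mem_F)
  qed simp
  then show ?thesis using n bottom_pos assms full_rows_pos h_full by (simp add: move_def)
qed

lemma move_partial:
  assumes "n \<le> r" "r < m" "lo \<le> c" "c < hi"
  shows "move (r, c) = (r + 1, lo + (c - lo + \<delta>') mod (hi - lo))"
proof -
  let ?c = "lo + (c - lo + \<delta>') mod (hi - lo)"
  have "?c < hi" by (rule interval_mod_less)
  moreover have "(r + 1) mod (m + d) = r + 1" using assms bottom_pos by simp
  ultimately have "((r + 1) mod (m + d), ?c) \<in> F"
    using assms hi_le_C bottom_pos by (auto simp: mem_F)
  then show ?thesis using assms h_partial \<open>(r + 1) mod (m + d) = r + 1\<close>
    by (simp add: move_def sC_next)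
qed

lemma move_last_bottom_row: "j < C \<Longrightarrow> move (d - 1 + m, j) = (0, (j + 1) mod C)"
proof -
  have "d - 1 + m + 1 = m + d" using bottom_pos by simp
  then have "(d - 1 + m + 1) mod (m + d) = 0" by (metis mod_self)
  then show "j < C \<Longrightarrow> ?thesis" using move_bottom[of "d - 1" j] bottom_pos by simp
qed

lemma move_full_diagonal:
  assumes "s + 1 < n" "0 < C"
  shows "move (s, (j + 1 + s * \<delta>) mod C) = (s + 1, (j + 1 + (s + 1) * \<delta>) mod C)"
proof -
  have "move (s, (j + 1 + s * \<delta>) mod C) = (s + 1, ((j + 1 + s * \<delta>) mod C + \<delta>) mod C)"
    by (rule move_full) (use assms in simp_all)
  then show ?thesis by (simp only: mod_add_mult_step)
qed

definition exit_column :: "nat \<Rightarrow> nat" where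
  "exit_column j = (j + 1 + n * \<delta>) mod C"

lemma exit_column_step: "((j + 1 + (n - 1) * \<delta>) mod C + \<delta>) mod C = exit_column j"
  using mod_add_mult_step[of "j + 1" "n - 1" \<delta> C] full_rows_pos by (simp add: exit_column_def)

lemma first_return_move_skip:
  assumes j: "j < C" and skip: "\<not> (lo \<le> exit_column j \<and> exit_column j < hi)"
  shows "first_return move m (d - 1, j) = (0, exit_column j)"
proof -
  define p where "p s = (if s < n then s else m, (j + 1 + s * \<delta>) mod C)" for s
  have "first_return move m (d - 1, j) = (fst (p n) - m, snd (p n))"
  proof (rule first_return_path)
    show "move (fst (d - 1, j) + m, snd (d - 1, j)) = p 0"
      using move_last_bottom_row j full_rows_pos by (simp add: p_def)
  next
    fix s assume "s < n"
    show "move (p s) = p (Suc s)"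
    proof (cases "Suc s < n")
      case True
      then show ?thesis using move_full_diagonal j by (simp add: p_def)
    next
      case False
      then have "s = n - 1" using \<open>s < n\<close> by simp
      then have "p s = (n - 1, (j + 1 + (n - 1) * \<delta>) mod C)" "p (Suc s) = (m, exit_column j)"
        using full_rows_pos by (simp_all add: p_def exit_column_def)
      then show ?thesis using move_skip exit_column_step skip j by simp
    qed
    show "fst (p s) < m" using \<open>s < n\<close> full_le_top by (simp add: p_def)
  qed (simp add: p_def)
  then show ?thesis by (simp add: p_def exit_column_def)
qed

lemma first_return_move_enter:
  assumes j: "j < C" and enter: "lo \<le> exit_column j" "exit_column j < hi"
  shows "first_return move m (d - 1, j) =
    (0, lo + (exit_column j - lo + (m - n) * \<delta>') mod (hi - lo))"
proof -
  define c where "c = exit_column j"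
  define p where "p s = (s, if s < n then (j + 1 + s * \<delta>) mod C
                            else lo + (c - lo + (s - n) * \<delta>') mod (hi - lo))" for s
  have "first_return move m (d - 1, j) = (fst (p m) - m, snd (p m))"
  proof (rule first_return_path)
    show "move (fst (d - 1, j) + m, snd (d - 1, j)) = p 0"
      using move_last_bottom_row j full_rows_pos by (simp add: p_def)
  next
    fix s assume "s < m"
    consider "Suc s < n" | "Suc s = n" | "n \<le> s" by linarith
    then show "move (p s) = p (Suc s)"
    proof cases
      case 1
      then show ?thesis using move_full_diagonal j by (simp add: p_def)
    next
      case 2
      then have "s = n - 1" by simp
      then have "move (p s) = (n, c)"
        using move_enter[of "(j + 1 + s * \<delta>) mod C"] exit_column_step enter j full_rows_pos
        by (simp add: p_def c_def)
      moreover have "c - lo < hi - lo" using enter by (simp add: c_def)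
      then have "lo + (c - lo) mod (hi - lo) = c" using enter by (simp add: c_def)
      ultimately show ?thesis using 2 by (simp add: p_def)
    next
      case 3
      have "lo + (c - lo + (s - n) * \<delta>') mod (hi - lo) < hi" by (rule interval_mod_less)
      then have "move (p s) =
          (Suc s, lo + ((c - lo + (s - n) * \<delta>') mod (hi - lo) + \<delta>') mod (hi - lo))"
        using move_partial[of s] 3 \<open>s < m\<close> full_rows_pos by (simp add: p_def)
      moreover have "Suc s - n = (s - n) + 1" using 3 by simp
      ultimately show ?thesis using 3 by (simp only: p_def mod_add_mult_step) simp
    qed
    show "fst (p s) < m" using \<open>s < m\<close> by (simp add: p_def)
  qed (simp add: p_def)
  then show ?thesis using full_le_top by (simp add: p_def c_def)
qed

lemma first_return_move:
  "j < C \<Longrightarrow> first_return move m (d - 1, j) =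
    (0, if lo \<le> exit_column j \<and> exit_column j < hi
        then lo + (exit_column j - lo + (m - n) * \<delta>') mod (hi - lo) else exit_column j)"
  using first_return_move_enter first_return_move_skip by simp

end

lemma return_columns_agree:
  fixes a b f c u :: nat
  assumes "f \<le> a" "f \<le> b" "c < a + b" "u = (c + f) mod (a + b)"
  shows "(if a \<le> c then a + (c - a + f) mod b else c) =
    (if u < a + f then (u + f * (a + f - 1)) mod (a + f) else u)"
proof -
  have wrap: "(u + f * (a + f - 1)) mod (a + f) = (u + a) mod (a + f)"
    using mod_add_mult_pred[of f "a + f" u] by simp
  consider "c < a" | "a \<le> c" "c + f < a + b" | "a \<le> c" "a + b \<le> c + f" by linarith
  then show ?thesis
  proof cases
    case 1
    then have "u = c + f" using assms by simp
    then have "(u + a) mod (a + f) = c"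
      using 1 by (metis add.commute add.left_commute mod_add_self2 mod_less trans_less_add1)
    then show ?thesis using 1 wrap \<open>u = c + f\<close> by simp
  next
    case 2
    then have "u = c + f" "c - a + f < b" using assms by simp_all
    then show ?thesis using 2 by simp
  next
    case 3
    then have "u = c + f - (a + b)" using assms by (simp add: le_mod_geq)
    moreover have "(c - a + f) mod b = c - a + f - b" using 3 assms by (simp add: le_mod_geq)
    ultimately show ?thesis using 3 assms wrap by simp
  qed
qed

lemma mem_bishop_array:
  "(r, c) \<in> stack (A1 a b f) a (J d (a + b)) \<longleftrightarrow>
    c < a + b \<and> (r < a - f \<or> a - f \<le> r \<and> r < a \<and> a \<le> c \<and> c < a + b \<or> a \<le> r \<and> r < a + d)"
  by (auto simp: mem_stack_iff A1_def J_def)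

lemma mem_sigma_array:
  "(r, c) \<in> stack (B1 a b f) (b + f) (J d (a + b)) \<longleftrightarrow>
    c < a + b \<and> (r < b \<or> b \<le> r \<and> r < b + f \<and> 0 \<le> c \<and> c < a + f \<or> b + f \<le> r \<and> r < b + f + d)"
  by (auto simp: mem_stack_iff B1_def J_def)

lemma block_walk_bishop:
  assumes "f < a" "0 < b" "0 < d"
  defines "F \<equiv> stack (A1 a b f) a (J d (a + b))"
  shows "block_walk (a + b) a (a - f) a (a + b) d F (sR (a + b) F) 1 1"
proof -
  interpret block_stack "a + b" a "a - f" a "a + b" d F
    using assms by unfold_locales (simp_all add: mem_bishop_array)
  show ?thesis by unfold_locales (simp_all add: sR_full_row sR_partial_row)
qed

lemma block_walk_sigma:
  assumes "f < b" "0 < a" "0 < d"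
  defines "F \<equiv> stack (B1 a b f) (b + f) (J d (a + b))"
  shows "block_walk (a + b) (b + f) b 0 (a + f) d F
    (\<lambda>x. if b + f \<le> fst x then sR (a + b) F x else sR_inv (a + b) F x) (a + b - 1) (a + f - 1)"
proof -
  interpret block_stack "a + b" "b + f" b 0 "a + f" d F
    using assms by unfold_locales (simp_all add: mem_sigma_array)
  show ?thesis by unfold_locales (simp_all add: sR_full_row sR_inv_full_row sR_inv_partial_row)
qed

theorem lemma4p4:
  fixes a b f d :: nat
  assumes "0 < a" and "0 < b" and "0 < f" and "0 < d" and "f < min a b"
  shows "phi_sigma_equiv
           (bishop (a + d) (a + b) (stack (A1 a b f) a (J d (a + b)))) a
           (\<lambda>x. let F = stack (B1 a b f) (b + f) (J d (a + b)) in
                 if b + f \<le> fst x then sC (b + f + d) F (sR (a + b) F x)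
                 else sC (b + f + d) F (sR_inv (a + b) F x))
           (b + f)
           (J d (a + b))"
proof -
  have f: "f < a" "f < b" using assms(5) by simp_all
  define FA where "FA = stack (A1 a b f) a (J d (a + b))"
  define FB where "FB = stack (B1 a b f) (b + f) (J d (a + b))"
  interpret A: block_walk "a + b" a "a - f" a "a + b" d FA "sR (a + b) FA" 1 1
    using block_walk_bishop f assms unfolding FA_def by simp
  interpret B: block_walk "a + b" "b + f" b 0 "a + f" d FB
    "\<lambda>x. if b + f \<le> fst x then sR (a + b) FB x else sR_inv (a + b) FB x" "a + b - 1" "a + f - 1"
    using block_walk_sigma f assms unfolding FB_def by simp
  have \<phi>: "bishop (a + d) (a + b) FA = A.move"
    by (simp add: fun_eq_iff bishop_def A.move_def)
  have \<sigma>: "(\<lambda>x. if b + f \<le> fst x then sC (b + f + d) FB (sR (a + b) FB x)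
                     else sC (b + f + d) FB (sR_inv (a + b) FB x)) = B.move"
    by (simp add: fun_eq_iff B.move_def)
  have returns: "first_return A.move a (d - 1, j) = first_return B.move (b + f) (d - 1, j)"
    if j: "j < a + b" for j
  proof -
    define c u where "c = A.exit_column j" and "u = B.exit_column j"
    have c: "c < a + b" using assms(1) unfolding c_def A.exit_column_def by simp
    have u: "u = (c + f) mod (a + b)"
      using mod_add_mult_pred[of b "a + b" "j + 1"] f
      unfolding c_def u_def A.exit_column_def B.exit_column_def by (simp add: mod_add_left_eq)
    have "first_return A.move a (d - 1, j) = (0, if a \<le> c then a + (c - a + f) mod b else c)"
      using A.first_return_move[OF j] f c unfolding c_def[symmetric] by simp
    moreover have "first_return B.move (b + f) (d - 1, j) =
        (0, if u < a + f then (u + f * (a + f - 1)) mod (a + f) else u)"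
      using B.first_return_move[OF j] unfolding u_def[symmetric] by simp
    ultimately show ?thesis using return_columns_agree[OF _ _ c u] f by simp
  qed
  show ?thesis
    unfolding FA_def[symmetric] FB_def[symmetric] Let_def \<phi> \<sigma>
    by (rule phi_sigma_equiv_J_last_rowI) (use A.leaves_bottom_iff B.leaves_bottom_iff returns in blast)+
qed

end
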